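(* Let $\varepsilon<\frac1{4\sqrt2}$ and let $|\nu\rangle=\frac1{\sqrt2}\big(|0^n\rangle|\psi_0\rangle+|1^n\rangle|\psi_1\rangle\big)$ be an $n$-nekomata state, where $|\psi_0\rangle,|\psi_1\rangle$ are arbitrary states on the same number of qubits. Then $\deg_\varepsilon(|\nu\rangle\langle\nu|)\ge n$. In particular, for the cat state $|\mathrm{Cat}_n\rangle=\frac1{\sqrt2}(|0^n\rangle+|1^n\rangle)$, $\deg_\varepsilon(|\mathrm{Cat}_n\rangle\langle\mathrm{Cat}_n|)\ge n$.
   Context: Pauli degree: with $P_\sigma=\bigotimes_iP_{\sigma_i}$, $P_0=I,P_1=X,P_2=Y,P_3=Z$, every $2^m\times2^m$ matrix is $A=\sum_\sigma\hat A(\sigma)P_\sigma$, $\deg(A)=\max\{|\{i:\sigma_i\ne0\}|:\hat A(\sigma)\ne0\}$, and $\deg_\varepsilon(A)=\min\{\deg(B):\|A-B\|\le\varepsilon\}$ with $\|\cdot\|$ the spectral norm. *)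

theory Defs
  imports "HOL-Analysis.Analysis" "HOL-Library.Extended_Nat"
begin

text \<open>Computational basis of m qubits: bit strings of length m (qubit i is the i-th
  tensor factor). A 2^m x 2^m matrix is a function on pairs of basis strings; only its
  values on bit strings of length m matter.\<close>

definition bits :: "nat \<Rightarrow> bool list set" where
  "bits m = {xs. length xs = m}"

definition vnorm :: "nat \<Rightarrow> (bool list \<Rightarrow> complex) \<Rightarrow> real" where
  "vnorm m v = sqrt (\<Sum>x\<in>bits m. (cmod (v x))\<^sup>2)"

definition mat_vec :: "nat \<Rightarrow> (bool list \<Rightarrow> bool list \<Rightarrow> complex) \<Rightarrow> (bool list \<Rightarrow> complex) \<Rightarrow> (bool list \<Rightarrow> complex)" where
  "mat_vec m A v = (\<lambda>x. \<Sum>y\<in>bits m. A x y * v y)"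

definition spec_norm :: "nat \<Rightarrow> (bool list \<Rightarrow> bool list \<Rightarrow> complex) \<Rightarrow> real" where
  "spec_norm m A = (SUP v\<in>{v. vnorm m v = 1}. vnorm m (mat_vec m A v))"

text \<open>Single-qubit Pauli matrices P_0 = I, P_1 = X, P_2 = Y, P_3 = Z;
  entry (row x, column y), with False = |0>, True = |1>.\<close>

definition pauli1 :: "nat \<Rightarrow> bool \<Rightarrow> bool \<Rightarrow> complex" where
  "pauli1 s x y =
     (if s = 0 then (if x = y then 1 else 0)
      else if s = 1 then (if x \<noteq> y then 1 else 0)
      else if s = 2 then (if x = False \<and> y = True then - \<i> else if x = True \<and> y = False then \<i> else 0)
      else (if x = y then (if x then -1 else 1) else 0))"

definition pauli_strings :: "nat \<Rightarrow> nat list set" where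
  "pauli_strings m = {\<sigma>. length \<sigma> = m \<and> (\<forall>s\<in>set \<sigma>. s < 4)}"

definition pauli_weight :: "nat list \<Rightarrow> nat" where
  "pauli_weight \<sigma> = length (filter (\<lambda>s. s \<noteq> 0) \<sigma>)"

definition pauli_mat :: "nat list \<Rightarrow> bool list \<Rightarrow> bool list \<Rightarrow> complex" where
  "pauli_mat \<sigma> x y = (\<Prod>i<length \<sigma>. pauli1 (\<sigma> ! i) (x ! i) (y ! i))"

text \<open>Pauli (Fourier) coefficient: the unique coefficients in A = sum_sigma hat A(sigma) P_sigma,
  hat A(sigma) = 2^{-m} tr(P_sigma^dagger A).\<close>

definition pauli_coeff :: "nat \<Rightarrow> (bool list \<Rightarrow> bool list \<Rightarrow> complex) \<Rightarrow> nat list \<Rightarrow> complex" where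
  "pauli_coeff m A \<sigma> =
     (\<Sum>x\<in>bits m. \<Sum>y\<in>bits m. cnj (pauli_mat \<sigma> x y) * A x y) / 2 ^ m"

text \<open>Pauli degree (degree of the zero matrix taken to be 0).\<close>

definition pauli_deg :: "nat \<Rightarrow> (bool list \<Rightarrow> bool list \<Rightarrow> complex) \<Rightarrow> nat" where
  "pauli_deg m A =
     Max (insert 0 {pauli_weight \<sigma> | \<sigma>. \<sigma> \<in> pauli_strings m \<and> pauli_coeff m A \<sigma> \<noteq> 0})"

text \<open>Approximate Pauli degree: min over B with ||A - B|| <= eps (infinity if no such B).\<close>

definition approx_pauli_deg :: "nat \<Rightarrow> real \<Rightarrow> (bool list \<Rightarrow> bool list \<Rightarrow> complex) \<Rightarrow> enat" where
  "approx_pauli_deg m \<epsilon> A =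
     (INF B\<in>{B. spec_norm m (\<lambda>x y. A x y - B x y) \<le> \<epsilon>}. enat (pauli_deg m B))"

definition proj :: "(bool list \<Rightarrow> complex) \<Rightarrow> bool list \<Rightarrow> bool list \<Rightarrow> complex" where
  "proj v = (\<lambda>x y. v x * cnj (v y))"

definition nekomata :: "nat \<Rightarrow> (bool list \<Rightarrow> complex) \<Rightarrow> (bool list \<Rightarrow> complex) \<Rightarrow> bool list \<Rightarrow> complex" where
  "nekomata n \<psi>0 \<psi>1 xs =
     ((if take n xs = replicate n False then \<psi>0 (drop n xs) else 0)
      + (if take n xs = replicate n True then \<psi>1 (drop n xs) else 0)) / complex_of_real (sqrt 2)"

definition cat_state :: "nat \<Rightarrow> bool list \<Rightarrow> complex" where
  "cat_state n xs =
     ((if xs = replicate n False then 1 else 0) + (if xs = replicate n True then 1 else 0))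
       / complex_of_real (sqrt 2)"

end

theory Submission
  imports Defs
begin

text \<open>Expand a matrix B of Pauli degree d < n in the Pauli basis. Every Pauli string of weight
  at most d acts as the identity on one of the first n qubits, and the identity has no entries
  between |0> and |1>; hence B vanishes on the block <0^n| . |1^n>. On this block the
  projector onto the nekomata state equals |psi0><psi1| / 2, so testing |nu><nu| - B on the unit
  vector |1^n>|psi1> yields an output of norm at least 1/2 on the |0^n> block. Thus
  ||nu><nu| - B|| \<ge> 1/2 > \<epsilon>. The cat state is the case k = 0.\<close>

lemma finite_bits: "finite (bits m)"
  unfolding bits_def using finite_lists_length_eq[of "UNIV :: bool set" m] by simp

lemma finite_pauli_strings: "finite (pauli_strings m)"
proof -
  have "pauli_strings m = {\<sigma>. set \<sigma> \<subseteq> {..<4} \<and> length \<sigma> = m}"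
    unfolding pauli_strings_def by auto
  then show ?thesis using finite_lists_length_eq[of "{..<4 :: nat}" m] by simp
qed

lemma bits_SucE:
  assumes "x \<in> bits (Suc m)"
  obtains a xs where "x = a # xs" "xs \<in> bits m"
  using assms by (auto simp: bits_def length_Suc_conv)

lemma pauli_strings_Suc:
  "pauli_strings (Suc m) = (\<lambda>(s, \<sigma>). s # \<sigma>) ` ({..<4} \<times> pauli_strings m)"
  unfolding pauli_strings_def by (auto simp: length_Suc_conv image_iff)

lemma pauli_mat_Cons: "pauli_mat (s # \<sigma>) (a # x) (b # y) = pauli1 s a b * pauli_mat \<sigma> x y"
  unfolding pauli_mat_def length_Cons prod.lessThan_Suc_shift by simp

lemma pauli1_orthogonal:
  "(\<Sum>s<4. pauli1 s a b * cnj (pauli1 s a' b')) = (if a = a' \<and> b = b' then 2 else 0)"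
proof -
  have "{..<4 :: nat} = {0, 1, 2, 3}" by auto
  then show ?thesis
    by (cases a; cases b; cases a'; cases b') (simp_all add: pauli1_def)
qed

lemma pauli_mat_orthogonal:
  assumes "x \<in> bits m" "y \<in> bits m" "x' \<in> bits m" "y' \<in> bits m"
  shows "(\<Sum>\<sigma>\<in>pauli_strings m. pauli_mat \<sigma> x y * cnj (pauli_mat \<sigma> x' y'))
           = (if x = x' \<and> y = y' then 2 ^ m else 0)"
  using assms
proof (induction m arbitrary: x y x' y')
  case 0
  then have "x = []" "y = []" "x' = []" "y' = []" by (auto simp: bits_def)
  moreover have "pauli_strings 0 = {[]}" by (auto simp: pauli_strings_def)
  ultimately show ?case by (simp add: pauli_mat_def)
next
  case (Suc m)
  obtain a xs b ys a' xs' b' ys' where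
    x: "x = a # xs" "xs \<in> bits m" and y: "y = b # ys" "ys \<in> bits m" and
    x': "x' = a' # xs'" "xs' \<in> bits m" and y': "y' = b' # ys'" "ys' \<in> bits m"
    using Suc.prems by (elim bits_SucE)
  have inj: "inj_on (\<lambda>(s, \<sigma>). s # \<sigma>) ({..<4 :: nat} \<times> pauli_strings m)"
    by (auto simp: inj_on_def)
  have "(\<Sum>\<sigma>\<in>pauli_strings (Suc m). pauli_mat \<sigma> x y * cnj (pauli_mat \<sigma> x' y'))
      = (\<Sum>(s, \<sigma>)\<in>{..<4} \<times> pauli_strings m.
           (pauli1 s a b * cnj (pauli1 s a' b')) * (pauli_mat \<sigma> xs ys * cnj (pauli_mat \<sigma> xs' ys')))"
    unfolding pauli_strings_Suc sum.reindex[OF inj]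
    by (intro sum.cong refl) (auto simp: x y x' y' pauli_mat_Cons mult_ac)
  also have "\<dots> = (\<Sum>s<4. pauli1 s a b * cnj (pauli1 s a' b')) *
                 (\<Sum>\<sigma>\<in>pauli_strings m. pauli_mat \<sigma> xs ys * cnj (pauli_mat \<sigma> xs' ys'))"
    by (simp add: sum_product sum.cartesian_product)
  also have "\<dots> = (if x = x' \<and> y = y' then 2 ^ Suc m else 0)"
    unfolding pauli1_orthogonal Suc.IH[OF x(2) y(2) x'(2) y'(2)] by (simp add: x y x' y')
  finally show ?case .
qed

lemma pauli_expansion:
  assumes "x \<in> bits m" "y \<in> bits m"
  shows "B x y = (\<Sum>\<sigma>\<in>pauli_strings m. pauli_coeff m B \<sigma> * pauli_mat \<sigma> x y)"
proof -
  have "(\<Sum>\<sigma>\<in>pauli_strings m. pauli_coeff m B \<sigma> * pauli_mat \<sigma> x y)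
      = (\<Sum>\<sigma>\<in>pauli_strings m. \<Sum>x'\<in>bits m. \<Sum>y'\<in>bits m.
           B x' y' * (pauli_mat \<sigma> x y * cnj (pauli_mat \<sigma> x' y')) / 2 ^ m)"
    unfolding pauli_coeff_def
    by (intro sum.cong refl) (simp add: sum_divide_distrib sum_distrib_left mult_ac)
  also have "\<dots> = (\<Sum>x'\<in>bits m. \<Sum>y'\<in>bits m. B x' y' *
           (\<Sum>\<sigma>\<in>pauli_strings m. pauli_mat \<sigma> x y * cnj (pauli_mat \<sigma> x' y')) / 2 ^ m)"
    by (subst sum.swap, subst sum.swap) (simp add: sum_divide_distrib sum_distrib_left)
  also have "\<dots> = (\<Sum>x'\<in>bits m. \<Sum>y'\<in>bits m. if x' = x \<and> y' = y then B x y else 0)"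
    by (intro sum.cong refl) (auto simp: pauli_mat_orthogonal assms)
  also have "\<dots> = B x y"
    using assms by (simp add: finite_bits sum.delta' sum.If_cases flip: if_if_eq_conj)
  finally show ?thesis by simp
qed

lemma pauli_weight_eq_card: "pauli_weight \<sigma> = card {i. i < length \<sigma> \<and> \<sigma> ! i \<noteq> 0}"
  unfolding pauli_weight_def by (rule length_filter_conv_card)

lemma pauli_weight_le_pauli_deg:
  assumes "\<sigma> \<in> pauli_strings m" "pauli_coeff m B \<sigma> \<noteq> 0"
  shows "pauli_weight \<sigma> \<le> pauli_deg m B"
proof -
  have "finite {pauli_weight \<sigma> | \<sigma>. \<sigma> \<in> pauli_strings m \<and> pauli_coeff m B \<sigma> \<noteq> 0}"
    by (rule finite_subset[of _ "pauli_weight ` pauli_strings m"]) (auto simp: finite_pauli_strings)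
  then show ?thesis
    unfolding pauli_deg_def using assms by (intro Max_ge) auto
qed

lemma pauli_mat_eq_0_if_identity_flip:
  assumes "i < length \<sigma>" "\<sigma> ! i = 0" "x ! i \<noteq> y ! i"
  shows "pauli_mat \<sigma> x y = 0"
  unfolding pauli_mat_def using assms by (intro prod_zero bexI[of _ i]) (simp_all add: pauli1_def)

lemma low_pauli_deg_entry_eq_0:
  assumes "x \<in> bits m" "y \<in> bits m" "I \<subseteq> {..<m}" "\<forall>i\<in>I. x ! i \<noteq> y ! i"
    and "pauli_deg m B < card I"
  shows "B x y = 0"
proof -
  have "pauli_coeff m B \<sigma> * pauli_mat \<sigma> x y = 0" if \<sigma>: "\<sigma> \<in> pauli_strings m" for \<sigma>
  proof (cases "pauli_coeff m B \<sigma> = 0")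
    case False
    have len: "length \<sigma> = m" using \<sigma> by (simp add: pauli_strings_def)
    have "card {i. i < m \<and> \<sigma> ! i \<noteq> 0} < card I"
      using pauli_weight_le_pauli_deg[OF \<sigma> False] assms(5) len
      by (simp add: pauli_weight_eq_card)
    then have "\<not> I \<subseteq> {i. i < m \<and> \<sigma> ! i \<noteq> 0}"
      using card_mono[of "{i. i < m \<and> \<sigma> ! i \<noteq> 0}" I] by fastforce
    then obtain i where "i \<in> I" "\<sigma> ! i = 0" using assms(3) by auto
    then have "pauli_mat \<sigma> x y = 0"
      using assms(3,4) len by (intro pauli_mat_eq_0_if_identity_flip) auto
    then show ?thesis by simp
  qed simp
  then show ?thesis using pauli_expansion[OF assms(1,2), of B] by (simp add: sum.neutral)
qed

lemma vnorm_unit_component_le: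
  assumes "vnorm m v = 1" "y \<in> bits m"
  shows "cmod (v y) \<le> 1"
proof -
  have "(cmod (v y))\<^sup>2 \<le> (\<Sum>x\<in>bits m. (cmod (v x))\<^sup>2)"
    by (rule member_le_sum) (use assms(2) finite_bits in auto)
  also have "\<dots> = 1" using assms(1) unfolding vnorm_def by simp
  finally show ?thesis by (simp add: power_le_one_iff)
qed

lemma vnorm_scale: "vnorm m (\<lambda>x. c * v x) = cmod c * vnorm m v"
  unfolding vnorm_def
  by (simp add: norm_mult power_mult_distrib sum_distrib_left[symmetric] real_sqrt_mult)

lemma bdd_above_vnorm_mat_vec: "bdd_above ((\<lambda>v. vnorm m (mat_vec m M v)) ` {v. vnorm m v = 1})"
proof (rule bdd_aboveI2)
  fix v assume "v \<in> {v. vnorm m v = 1}"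
  then have v: "vnorm m v = 1" by simp
  have "cmod (mat_vec m M v x) \<le> (\<Sum>y\<in>bits m. cmod (M x y))" for x
  proof -
    have "cmod (mat_vec m M v x) \<le> (\<Sum>y\<in>bits m. cmod (M x y) * cmod (v y))"
      unfolding mat_vec_def norm_mult[symmetric] by (rule norm_sum)
    also have "\<dots> \<le> (\<Sum>y\<in>bits m. cmod (M x y))"
      using vnorm_unit_component_le[OF v] by (intro sum_mono mult_left_le) auto
    finally show ?thesis .
  qed
  then show "vnorm m (mat_vec m M v) \<le> sqrt (\<Sum>x\<in>bits m. (\<Sum>y\<in>bits m. cmod (M x y))\<^sup>2)"
    unfolding vnorm_def by (intro real_sqrt_le_mono sum_mono power_mono) auto
qed

lemma vnorm_mat_vec_le_spec_norm: "vnorm m v = 1 \<Longrightarrow> vnorm m (mat_vec m M v) \<le> spec_norm m M"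
  unfolding spec_norm_def by (rule cSUP_upper) (use bdd_above_vnorm_mat_vec in auto)

lemma spec_norm_cong:
  assumes "\<forall>x\<in>bits m. \<forall>y\<in>bits m. A x y = A' x y"
  shows "spec_norm m A = spec_norm m A'"
  unfolding spec_norm_def vnorm_def mat_vec_def using assms by simp

lemma approx_pauli_deg_cong:
  assumes "\<forall>x\<in>bits m. \<forall>y\<in>bits m. A x y = A' x y"
  shows "approx_pauli_deg m \<epsilon> A = approx_pauli_deg m \<epsilon> A'"
proof -
  have "spec_norm m (\<lambda>x y. A x y - B x y) = spec_norm m (\<lambda>x y. A' x y - B x y)" for B
    using assms by (intro spec_norm_cong) simp
  then show ?thesis unfolding approx_pauli_deg_def by simp
qed

lemma sum_bits_prefix_block:
  fixes g :: "bool list \<Rightarrow> 'a :: comm_monoid_add"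
  assumes "\<forall>y\<in>bits (n + k). g y \<noteq> 0 \<longrightarrow> take n y = replicate n c"
  shows "(\<Sum>y\<in>bits (n + k). g y) = (\<Sum>z\<in>bits k. g (replicate n c @ z))"
proof -
  have block: "(\<lambda>z. replicate n c @ z) ` bits k = {y\<in>bits (n + k). take n y = replicate n c}"
  proof (rule subset_antisym)
    show "{y\<in>bits (n + k). take n y = replicate n c} \<subseteq> (\<lambda>z. replicate n c @ z) ` bits k"
    proof
      fix y assume y: "y \<in> {y\<in>bits (n + k). take n y = replicate n c}"
      then have "y = replicate n c @ drop n y" using append_take_drop_id[of n y] by simp
      moreover have "drop n y \<in> bits k" using y by (simp add: bits_def)
      ultimately show "y \<in> (\<lambda>z. replicate n c @ z) ` bits k" by blast
    qed
  qed (auto simp: bits_def)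
  have "(\<Sum>y\<in>bits (n + k). g y) = (\<Sum>y\<in>{y\<in>bits (n + k). take n y = replicate n c}. g y)"
    using assms by (intro sum.mono_neutral_right finite_bits) auto
  also have "\<dots> = (\<Sum>z\<in>bits k. g (replicate n c @ z))"
    unfolding block[symmetric] by (subst sum.reindex) (auto simp: inj_on_def)
  finally show ?thesis .
qed

lemma vnorm_prefix_block_le: "vnorm k (\<lambda>z. u (replicate n c @ z)) \<le> vnorm (n + k) u"
proof -
  have "(\<Sum>z\<in>bits k. (cmod (u (replicate n c @ z)))\<^sup>2)
      = (\<Sum>y\<in>(\<lambda>z. replicate n c @ z) ` bits k. (cmod (u y))\<^sup>2)"
    by (subst sum.reindex) (auto simp: inj_on_def)
  also have "\<dots> \<le> (\<Sum>y\<in>bits (n + k). (cmod (u y))\<^sup>2)"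
    by (intro sum_mono2 finite_bits) (auto simp: bits_def)
  finally show ?thesis unfolding vnorm_def by (rule real_sqrt_le_mono)
qed

lemma low_pauli_deg_corner_block_eq_0:
  assumes "pauli_deg (n + k) B < n" "z \<in> bits k"
    and "y \<in> bits (n + k)" "take n y = replicate n True"
  shows "B (replicate n False @ z) y = 0"
proof (rule low_pauli_deg_entry_eq_0[where I = "{..<n}"])
  show "\<forall>i\<in>{..<n}. (replicate n False @ z) ! i \<noteq> y ! i"
    using assms(4) by (auto simp: nth_append) (metis nth_replicate nth_take)
qed (use assms in \<open>auto simp: bits_def\<close>)

lemma spec_norm_nekomata_minus_low_degree_ge:
  assumes deg: "pauli_deg (n + k) B < n"
    and unit: "vnorm k \<psi>0 = 1" "vnorm k \<psi>1 = 1"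
  shows "1 / 2 \<le> spec_norm (n + k) (\<lambda>x y. proj (nekomata n \<psi>0 \<psi>1) x y - B x y)"
proof -
  define \<nu> where "\<nu> = nekomata n \<psi>0 \<psi>1"
  define w where "w y = (if take n y = replicate n True then \<psi>1 (drop n y) else 0)" for y
  define r2 where "r2 = complex_of_real (sqrt 2)"
  have "replicate n True \<noteq> replicate n False" using deg by (cases n) auto
  then have \<nu>0: "\<nu> (replicate n False @ z) = \<psi>0 z / r2"
    and \<nu>1: "\<nu> (replicate n True @ z) = \<psi>1 z / r2" for z
    by (simp_all add: \<nu>_def nekomata_def r2_def)
  have w_block: "\<forall>y\<in>bits (n + k). g y * w y \<noteq> 0 \<longrightarrow> take n y = replicate n True" for g
    by (simp add: w_def)
  have "(\<Sum>y\<in>bits (n + k). (cmod (w y))\<^sup>2) = (\<Sum>z\<in>bits k. (cmod (w (replicate n True @ z)))\<^sup>2)"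
    by (intro sum_bits_prefix_block) (simp add: w_def)
  then have "vnorm (n + k) w = vnorm k \<psi>1" by (simp add: vnorm_def w_def)
  then have w_unit: "vnorm (n + k) w = 1" using unit(2) by simp
  have "(\<Sum>y\<in>bits (n + k). cnj (\<nu> y) * w y) = (\<Sum>z\<in>bits k. cnj (\<psi>1 z) * \<psi>1 z) / cnj r2"
    using sum_bits_prefix_block[OF w_block] by (simp add: \<nu>1 w_def sum_divide_distrib)
  also have "\<dots> = 1 / r2"
    using unit(2)
    by (simp add: r2_def vnorm_def mult.commute flip: complex_norm_square of_real_sum of_real_power)
  finally have overlap: "(\<Sum>y\<in>bits (n + k). cnj (\<nu> y) * w y) = 1 / r2" .
  have block_output:
    "mat_vec (n + k) (\<lambda>x y. proj \<nu> x y - B x y) w (replicate n False @ z) = 1 / 2 * \<psi>0 z"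
    if z: "z \<in> bits k" for z
  proof -
    let ?x = "replicate n False @ z"
    have "B ?x y = 0" if "y \<in> bits (n + k)" "take n y = replicate n True" for y
      using low_pauli_deg_corner_block_eq_0[OF deg z that] .
    then have "mat_vec (n + k) (\<lambda>x y. proj \<nu> x y - B x y) w ?x
        = \<nu> ?x * (\<Sum>y\<in>bits (n + k). cnj (\<nu> y) * w y)"
      unfolding mat_vec_def sum_distrib_left
      by (intro sum.cong refl) (auto simp: proj_def w_def)
    also have "\<dots> = \<psi>0 z / (r2 * r2)" by (simp add: overlap \<nu>0)
    also have "\<dots> = 1 / 2 * \<psi>0 z" by (simp add: r2_def flip: of_real_mult)
    finally show ?thesis .
  qed
  have "vnorm k (\<lambda>z. 1 / 2 * \<psi>0 z)
      = vnorm k (\<lambda>z. mat_vec (n + k) (\<lambda>x y. proj \<nu> x y - B x y) w (replicate n False @ z))"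
    unfolding vnorm_def by (intro arg_cong[where f = sqrt] sum.cong refl) (simp only: block_output)
  also have "\<dots> \<le> spec_norm (n + k) (\<lambda>x y. proj \<nu> x y - B x y)"
    using vnorm_prefix_block_le vnorm_mat_vec_le_spec_norm[OF w_unit] by (rule order_trans)
  finally show ?thesis using unit(1) vnorm_scale[of k "1 / 2" \<psi>0] by (simp add: \<nu>_def)
qed

lemma approx_pauli_deg_nekomata_ge:
  assumes "\<epsilon> < 1 / 2" "vnorm k \<psi>0 = 1" "vnorm k \<psi>1 = 1"
  shows "enat n \<le> approx_pauli_deg (n + k) \<epsilon> (proj (nekomata n \<psi>0 \<psi>1))"
  unfolding approx_pauli_deg_def
proof (rule INF_greatest, rule ccontr)
  fix B assume "B \<in> {B. spec_norm (n + k) (\<lambda>x y. proj (nekomata n \<psi>0 \<psi>1) x y - B x y) \<le> \<epsilon>}"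
    and "\<not> enat n \<le> enat (pauli_deg (n + k) B)"
  then show False
    using spec_norm_nekomata_minus_low_degree_ge[of n k B \<psi>0 \<psi>1] assms by auto
qed

theorem corollary6p2:
  fixes \<epsilon> :: real and n k :: nat and \<psi>0 \<psi>1 :: "bool list \<Rightarrow> complex"
  assumes "\<epsilon> < 1 / (4 * sqrt 2)"
    and "vnorm k \<psi>0 = 1" and "vnorm k \<psi>1 = 1"
  shows "approx_pauli_deg (n + k) \<epsilon> (proj (nekomata n \<psi>0 \<psi>1)) \<ge> enat n
         \<and> approx_pauli_deg n \<epsilon> (proj (cat_state n)) \<ge> enat n"
proof -
  have "1 / (4 * sqrt 2) \<le> (1 / 4 :: real)" by (intro divide_left_mono) auto
  with assms(1) have \<epsilon>: "\<epsilon> < 1 / 2" by linarith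
  have unit: "vnorm 0 (\<lambda>_. 1) = 1" by (simp add: vnorm_def bits_def)
  have "\<forall>x\<in>bits (n + 0). \<forall>y\<in>bits (n + 0).
      proj (cat_state n) x y = proj (nekomata n (\<lambda>_. 1) (\<lambda>_. 1)) x y"
    by (auto simp: bits_def proj_def cat_state_def nekomata_def)
  then have "approx_pauli_deg n \<epsilon> (proj (cat_state n))
      = approx_pauli_deg (n + 0) \<epsilon> (proj (nekomata n (\<lambda>_. 1) (\<lambda>_. 1)))"
    by (simp add: approx_pauli_deg_cong)
  then show ?thesis
    using approx_pauli_deg_nekomata_ge[OF \<epsilon> assms(2,3)]
      approx_pauli_deg_nekomata_ge[OF \<epsilon> unit unit, of n] by simp
qed

end
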